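(* For every $\omega\in\mathbb{R}$ and every $a\in\mathbb{R}$ there exists $b_0>0$ such that for all $b\ge b_0$, $\omega$ lies in the interior of the rotation interval $I(F_{a,b})$.
   Context: $F_{a,b}(x)=x+a+\frac{b}{2\pi}\sin(2\pi x)$ for $(a,b)\in\mathbb{R}\times[0,\infty)$. For such a lift $F$, with $\underline{\rho}_F(x)=\liminf_{n}F^n(x)/n$ and $\overline{\rho}_F(x)=\limsup_{n}F^n(x)/n$, the rotation interval is $I(F)=[\inf_x\underline{\rho}_F(x),\ \sup_x\overline{\rho}_F(x)]$. *)

theory Defs
  imports "HOL-Analysis.Analysis" "HOL-Library.Extended_Real"
begin

definition F_std :: "real \<Rightarrow> real \<Rightarrow> real \<Rightarrow> real" where
  "F_std a b x = x + a + b / (2 * pi) * sin (2 * pi * x)"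

definition rot_lower_pt :: "(real \<Rightarrow> real) \<Rightarrow> real \<Rightarrow> ereal" where
  "rot_lower_pt F x = liminf (\<lambda>n::nat. ereal ((F ^^ n) x / real n))"

definition rot_upper_pt :: "(real \<Rightarrow> real) \<Rightarrow> real \<Rightarrow> ereal" where
  "rot_upper_pt F x = limsup (\<lambda>n::nat. ereal ((F ^^ n) x / real n))"

definition rotation_interval :: "(real \<Rightarrow> real) \<Rightarrow> real set" where
  "rotation_interval F =
     {r. (INF x. rot_lower_pt F x) \<le> ereal r \<and> ereal r \<le> (SUP x. rot_upper_pt F x)}"

end

theory Submission
  imports Defs
begin

text \<open>For large b the displacement F x - x = a + b/(2 pi) sin(2 pi x) of F = F_{a,b} sweeps the whole
  interval [a - b/(2 pi), a + b/(2 pi)], so it takes integer values k1 < \<omega> < k2 at some points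
  x1, x2. Since F commutes with integer translations, F xi = xi + ki gives F^n xi = xi + n ki, so
  xi has rotation number ki and [k1, k2] is contained in I(F).\<close>

lemma rot_pt_eq_if_tendsto:
  assumes "(\<lambda>n. (F ^^ n) x / real n) \<longlonglongrightarrow> r"
  shows "rot_lower_pt F x = ereal r" and "rot_upper_pt F x = ereal r"
proof -
  have lim: "(\<lambda>n. ereal ((F ^^ n) x / real n)) \<longlonglongrightarrow> ereal r"
    using assms by (rule tendsto_ereal)
  show "rot_lower_pt F x = ereal r"
    unfolding rot_lower_pt_def by (rule lim_imp_Liminf[OF _ lim]) simp
  show "rot_upper_pt F x = ereal r"
    unfolding rot_upper_pt_def by (rule lim_imp_Limsup[OF _ lim]) simp
qed

lemma funpow_translation_point:
  assumes commute: "\<And>y m. F (y + of_int m) = F y + of_int m"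
    and Fx: "F x = x + of_int k"
  shows "(F ^^ n) x = x + of_int (int n * k)"
proof (induction n)
  case 0
  then show ?case by simp
next
  case (Suc n)
  have "(F ^^ Suc n) x = F x + of_int (int n * k)"
    using Suc commute[of x "int n * k"] by simp
  also have "\<dots> = x + of_int (int (Suc n) * k)"
    by (simp add: Fx algebra_simps)
  finally show ?case .
qed

lemma rot_pt_translation_point:
  assumes commute: "\<And>y m. F (y + of_int m) = F y + of_int m"
    and Fx: "F x = x + of_int k"
  shows "rot_lower_pt F x = ereal (of_int k)" and "rot_upper_pt F x = ereal (of_int k)"
proof -
  have "\<forall>\<^sub>F n in sequentially. x / real n + of_int k = (F ^^ n) x / real n"
    using eventually_gt_at_top[of "0::nat"]
    by eventually_elim (simp add: funpow_translation_point[OF commute Fx] field_simps)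
  moreover have "(\<lambda>n. x / real n + of_int k) \<longlonglongrightarrow> 0 + of_int k"
    by (intro tendsto_add lim_const_over_n tendsto_const)
  ultimately have "(\<lambda>n. (F ^^ n) x / real n) \<longlonglongrightarrow> of_int k"
    using tendsto_cong by force
  then show "rot_lower_pt F x = ereal (of_int k)" and "rot_upper_pt F x = ereal (of_int k)"
    by (rule rot_pt_eq_if_tendsto)+
qed

lemma atLeastAtMost_subset_rotation_interval:
  assumes "rot_lower_pt F x\<^sub>1 \<le> ereal r\<^sub>1" and "ereal r\<^sub>2 \<le> rot_upper_pt F x\<^sub>2"
  shows "{r\<^sub>1..r\<^sub>2} \<subseteq> rotation_interval F"
proof
  fix r assume "r \<in> {r\<^sub>1..r\<^sub>2}"
  then have "ereal r\<^sub>1 \<le> ereal r" and "ereal r \<le> ereal r\<^sub>2"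
    by simp_all
  moreover have "(INF x. rot_lower_pt F x) \<le> ereal r\<^sub>1"
    using assms(1) by (meson INF_lower2 UNIV_I)
  moreover have "ereal r\<^sub>2 \<le> (SUP x. rot_upper_pt F x)"
    using assms(2) by (meson SUP_upper2 UNIV_I)
  ultimately show "r \<in> rotation_interval F"
    unfolding rotation_interval_def mem_Collect_eq by (meson order_trans)
qed

lemma F_std_add_of_int: "F_std a b (x + of_int m) = F_std a b x + of_int m"
proof -
  have "sin (2 * pi * (x + of_int m)) = sin (2 * pi * x + 2 * pi * of_int m)"
    by (simp add: algebra_simps)
  also have "\<dots> = sin (2 * pi * x)"
    by (simp add: sin_add)
  finally show ?thesis
    unfolding F_std_def by simp
qed

lemma F_std_displacement_surj:
  assumes b: "b > 0" and c: "\<bar>c - a\<bar> \<le> b / (2 * pi)"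
  shows "\<exists>x. F_std a b x = x + c"
proof -
  define s where "s = (c - a) * (2 * pi) / b"
  have "\<bar>s\<bar> = \<bar>c - a\<bar> * (2 * pi) / b"
    using b by (simp add: s_def abs_mult abs_divide)
  also have "\<dots> \<le> 1"
    using b c by (simp add: field_simps)
  finally have "\<bar>s\<bar> \<le> 1" .
  then have "sin (arcsin s) = s"
    by (simp add: sin_arcsin)
  then have "F_std a b (arcsin s / (2 * pi)) = arcsin s / (2 * pi) + c"
    using b by (simp add: F_std_def s_def field_simps)
  then show ?thesis ..
qed

lemma F_std_rotation_interval_superset:
  assumes b: "b > 0"
    and k\<^sub>1: "\<bar>of_int k\<^sub>1 - a\<bar> \<le> b / (2 * pi)" and k\<^sub>2: "\<bar>of_int k\<^sub>2 - a\<bar> \<le> b / (2 * pi)"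
  shows "{of_int k\<^sub>1..of_int k\<^sub>2} \<subseteq> rotation_interval (F_std a b)"
proof -
  obtain x\<^sub>1 x\<^sub>2 where "F_std a b x\<^sub>1 = x\<^sub>1 + of_int k\<^sub>1" and "F_std a b x\<^sub>2 = x\<^sub>2 + of_int k\<^sub>2"
    using F_std_displacement_surj[OF b k\<^sub>1] F_std_displacement_surj[OF b k\<^sub>2] by blast
  then show ?thesis
    by (intro atLeastAtMost_subset_rotation_interval[of _ x\<^sub>1 _ _ x\<^sub>2])
      (simp_all add: rot_pt_translation_point F_std_add_of_int)
qed

theorem lemma3p5p1:
  fixes \<omega> a :: real
  shows "\<exists>b0 > 0. \<forall>b \<ge> b0. \<omega> \<in> interior (rotation_interval (F_std a b))"
proof (intro exI conjI allI impI)
  define k\<^sub>1 k\<^sub>2 where k_defs: "k\<^sub>1 = \<lfloor>\<omega>\<rfloor> - 1" "k\<^sub>2 = \<lfloor>\<omega>\<rfloor> + 1"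
  show b0_pos: "2 * pi * (\<bar>\<omega>\<bar> + \<bar>a\<bar> + 2) > 0"
    by (simp add: add_pos_nonneg)
  fix b assume "b \<ge> 2 * pi * (\<bar>\<omega>\<bar> + \<bar>a\<bar> + 2)"
  with b0_pos have "b > 0" and "\<bar>\<omega>\<bar> + \<bar>a\<bar> + 2 \<le> b / (2 * pi)"
    by (simp_all add: field_simps)
  moreover have "\<bar>of_int k\<^sub>1 - a\<bar> \<le> \<bar>\<omega>\<bar> + \<bar>a\<bar> + 2" and "\<bar>of_int k\<^sub>2 - a\<bar> \<le> \<bar>\<omega>\<bar> + \<bar>a\<bar> + 2"
    unfolding k_defs by linarith+
  ultimately have "{of_int k\<^sub>1..of_int k\<^sub>2} \<subseteq> rotation_interval (F_std a b)"
    by (intro F_std_rotation_interval_superset) auto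
  then have "{of_int k\<^sub>1<..<of_int k\<^sub>2} \<subseteq> interior (rotation_interval (F_std a b))"
    using interior_mono interior_atLeastAtMost_real by metis
  moreover have "\<omega> \<in> {of_int k\<^sub>1<..<of_int k\<^sub>2}"
    unfolding k_defs by simp linarith
  ultimately show "\<omega> \<in> interior (rotation_interval (F_std a b))"
    by blast
qed

end
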